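(* Let $N_T,N_R\ge 1$ be integers, $N=N_TN_R$, $\mathcal{R}>0$, $\beta>0$, and define $\xi=[2\pi(2^{2\mathcal{R}}-1)]^{-1/2}$, $\tau=2^{\mathcal{R}}-1$, $\varphi_H=\tau+\frac{1}{2\xi\sqrt\beta}$, $\varphi_L=\tau-\frac{1}{2\xi\sqrt\beta}$. For $\bar\gamma_k>0$ let $$F_{\mathrm{MRC}}(\gamma)=\Big\{1-e^{-\gamma/\bar\gamma_k}\sum_{n=0}^{N_R-1}\frac{1}{n!}\Big(\frac{\gamma}{\bar\gamma_k}\Big)^n\Big\}^{N_T},\qquad F_{\mathrm{SC}}(\gamma)=\{1-e^{-\gamma/\bar\gamma_k}\}^{N},$$ and $\bar\varepsilon_k^{\mathrm{TAS/MRC}}=\xi\sqrt\beta\int_{\varphi_L}^{\varphi_H}F_{\mathrm{MRC}}(\gamma)d\gamma$, $\bar\varepsilon_k^{\mathrm{TAS/SC}}=\xi\sqrt\beta\int_{\varphi_L}^{\varphi_H}F_{\mathrm{SC}}(\gamma)d\gamma$. Define $$\tilde\varepsilon_k^{\infty\,\mathrm{TAS/MRC}}=\frac{\xi\sqrt\beta\,[\varphi_H^{N+1}-\varphi_L^{N+1}]}{(N_R!)^{N_T}\,\bar\gamma_k^{N}\,(N+1)},\qquad \tilde\varepsilon_k^{\infty\,\mathrm{TAS/SC}}=\frac{\xi\sqrt\beta\,[\varphi_H^{N+1}-\varphi_L^{N+1}]}{\bar\gamma_k^{N}\,(N+1)}.$$ Then, as $\bar\gamma_k\to\infty$, $\bar\varepsilon_k^{\mathrm{TAS/MRC}}\sim\tilde\varepsilon_k^{\infty\,\mathrm{TAS/MRC}}$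 and $\bar\varepsilon_k^{\mathrm{TAS/SC}}\sim\tilde\varepsilon_k^{\infty\,\mathrm{TAS/SC}}$ (i.e., the ratios tend to $1$).
   Context: $\bar\varepsilon_k^{\mathcal X}$ is the paper's approximation of the average per-hop block error rate in the finite-blocklength regime for transmit antenna selection with maximum ratio combining (MRC) or selection combining (SC) over Rayleigh fading with average per-link SNR $\bar\gamma_k$; $\tilde\varepsilon_k^{\infty\,\mathcal X}$ is the asymptotic per-hop BLER. *)

theory Defs
  imports "HOL-Analysis.Analysis" "HOL-Library.Landau_Symbols"
begin

definition xi :: "real \<Rightarrow> real" where
  "xi R = 1 / sqrt (2 * pi * (2 powr (2 * R) - 1))"

definition tau :: "real \<Rightarrow> real" where
  "tau R = 2 powr R - 1"

definition phiH :: "real \<Rightarrow> real \<Rightarrow> real" where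
  "phiH R \<beta> = tau R + 1 / (2 * xi R * sqrt \<beta>)"

definition phiL :: "real \<Rightarrow> real \<Rightarrow> real" where
  "phiL R \<beta> = tau R - 1 / (2 * xi R * sqrt \<beta>)"

definition F_MRC :: "nat \<Rightarrow> nat \<Rightarrow> real \<Rightarrow> real \<Rightarrow> real" where
  "F_MRC NT NR g \<gamma> =
     (1 - exp (- \<gamma> / g) * (\<Sum>n<NR. (\<gamma> / g) ^ n / fact n)) ^ NT"

definition F_SC :: "nat \<Rightarrow> nat \<Rightarrow> real \<Rightarrow> real \<Rightarrow> real" where
  "F_SC NT NR g \<gamma> = (1 - exp (- \<gamma> / g)) ^ (NT * NR)"

definition eps_MRC :: "nat \<Rightarrow> nat \<Rightarrow> real \<Rightarrow> real \<Rightarrow> real \<Rightarrow> real" where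
  "eps_MRC NT NR R \<beta> g =
     xi R * sqrt \<beta> * integral {phiL R \<beta>..phiH R \<beta>} (F_MRC NT NR g)"

definition eps_SC :: "nat \<Rightarrow> nat \<Rightarrow> real \<Rightarrow> real \<Rightarrow> real \<Rightarrow> real" where
  "eps_SC NT NR R \<beta> g =
     xi R * sqrt \<beta> * integral {phiL R \<beta>..phiH R \<beta>} (F_SC NT NR g)"

definition eps_inf_MRC :: "nat \<Rightarrow> nat \<Rightarrow> real \<Rightarrow> real \<Rightarrow> real \<Rightarrow> real" where
  "eps_inf_MRC NT NR R \<beta> g =
     xi R * sqrt \<beta> * (phiH R \<beta> ^ (NT * NR + 1) - phiL R \<beta> ^ (NT * NR + 1))
     / (fact NR ^ NT * g ^ (NT * NR) * real (NT * NR + 1))"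

definition eps_inf_SC :: "nat \<Rightarrow> nat \<Rightarrow> real \<Rightarrow> real \<Rightarrow> real \<Rightarrow> real" where
  "eps_inf_SC NT NR R \<beta> g =
     xi R * sqrt \<beta> * (phiH R \<beta> ^ (NT * NR + 1) - phiL R \<beta> ^ (NT * NR + 1))
     / (g ^ (NT * NR) * real (NT * NR + 1))"

end

theory Submission
  imports Defs
begin

text \<open>
  Writing E_k(x) = sum_n x^n / (n + k)! for the tail of the exponential series, the Erlang CDF
  satisfies 1 - e^(-x) sum_(n<k) x^n / n! = x^k e^(-x) E_k(x). Hence its m-th power at y/g is
  (y/g)^N Q(y/g) with N = m k, Q continuous and Q(0) = (k!)^(-m). An integral over a compact
  interval depends continuously on a parameter of the integrand, so g^N times the integral over
  [a, b] tends to Q(0) (b^(N+1) - a^(N+1)) / (N+1), which is nonzero because |phi_L| < phi_H.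
  Selection combining is the case k = 1, and the bounds N_T, N_R >= 1 are never needed.
\<close>

definition exp_tail :: "nat \<Rightarrow> real \<Rightarrow> real" where
  "exp_tail k x = (\<Sum>n. inverse (fact (n + k)) * x ^ n)"

lemma summable_exp_tail: "summable (\<lambda>n. inverse (fact (n + k)) * (x::real) ^ n)"
proof (rule summable_comparison_test'[where N=0])
  show "summable (\<lambda>n. inverse (fact n) * \<bar>x\<bar> ^ n)" by (rule summable_exp)
  fix n :: nat
  have "inverse (fact (n + k) :: real) \<le> inverse (fact n)"
    by (intro le_imp_inverse_le) (auto intro: fact_mono)
  then show "norm (inverse (fact (n + k)) * x ^ n) \<le> inverse (fact n) * \<bar>x\<bar> ^ n"
    by (auto simp: abs_mult power_abs intro!: mult_right_mono)
qed

lemma isCont_exp_tail: "isCont (exp_tail k) x"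
  unfolding exp_tail_def [abs_def]
  by (rule isCont_powser[where K="\<bar>x\<bar> + 1"]) (auto intro: summable_exp_tail)

lemma exp_tail_0 [simp]: "exp_tail k 0 = inverse (fact k)"
  using powser_zero[of "\<lambda>n. inverse (fact (n + k)) :: real"] by (simp add: exp_tail_def)

lemma one_minus_exp_times_partial_sum:
  "1 - exp (- x) * (\<Sum>n<k. x ^ n / fact n) = x ^ k * exp (- x) * exp_tail k x"
proof -
  have "(\<lambda>n. x ^ (n + k) / fact (n + k)) sums (exp x - (\<Sum>n<k. x ^ n / fact n))"
    using sums_iff_shift[of "\<lambda>n. x ^ n / fact n" k] exp_converges[of x]
    by (simp add: divide_inverse mult.commute)
  moreover have "(\<lambda>n. x ^ (n + k) / fact (n + k)) sums (x ^ k * exp_tail k x)"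
    using sums_mult[OF summable_sums[OF summable_exp_tail], of "x ^ k" k x]
    by (simp add: exp_tail_def power_add divide_inverse mult_ac)
  ultimately have "exp x - (\<Sum>n<k. x ^ n / fact n) = x ^ k * exp_tail k x"
    by (rule sums_unique2)
  moreover have "exp (- x) * exp x = 1"
    by (simp add: exp_minus_inverse mult.commute)
  ultimately show ?thesis
    by (metis mult.assoc mult.commute right_diff_distrib)
qed

lemma integral_power_interval:
  fixes a b :: real assumes "a \<le> b"
  shows "integral {a..b} (\<lambda>y. y ^ N) = (b ^ (N + 1) - a ^ (N + 1)) / real (N + 1)"
proof -
  have "((\<lambda>y. y ^ Suc N / Suc N) has_real_derivative y ^ N) (at y)" for y
    by (intro derivative_eq_intros) auto
  then have "((\<lambda>y. y ^ N) has_integral (b ^ Suc N / Suc N - a ^ Suc N / Suc N)) {a..b}"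
    by (intro fundamental_theorem_of_calculus[OF assms])
       (auto simp: has_real_derivative_iff_has_vector_derivative[symmetric]
             intro: has_field_derivative_at_within)
  then show ?thesis by (simp add: integral_unique diff_divide_distrib)
qed

lemma tendsto_integral_rescaled:
  fixes f Q :: "real \<Rightarrow> real"
  assumes f: "continuous_on {a..b} f" and Q: "continuous_on UNIV Q"
  shows "((\<lambda>g. integral {a..b} (\<lambda>y. f y * Q (y / g))) \<longlongrightarrow> integral {a..b} f * Q 0) at_top"
proof -
  define J where "J t = integral {a..b} (\<lambda>y. f y * Q (y * t))" for t
  have "continuous_on (UNIV \<times> cbox a b) (\<lambda>p. f (snd p) * Q (snd p * fst p))"
    by (intro continuous_on_mult continuous_on_compose2[OF f] continuous_on_compose2[OF Q]
          continuous_intros) auto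
  then have "continuous_on (UNIV \<times> cbox a b) (\<lambda>(t, y). f y * Q (y * t))"
    by (simp add: split_beta')
  then have "continuous_on UNIV J"
    unfolding J_def by (metis integral_continuous_on_param cbox_interval)
  then have "((\<lambda>g. J (inverse g)) \<longlongrightarrow> J 0) at_top"
    by (intro isCont_tendsto_compose[OF _ tendsto_inverse_0_at_top] filterlim_ident)
       (simp add: continuous_on_eq_continuous_at)
  then show ?thesis
    by (simp add: J_def divide_inverse)
qed

lemma integral_erlang_cdf_power_asymp_equiv:
  fixes a b :: real and k m :: nat
  assumes "a \<le> b" and "b ^ (m * k + 1) \<noteq> a ^ (m * k + 1)"
  shows "(\<lambda>g. integral {a..b} (\<lambda>y. (1 - exp (- y / g) * (\<Sum>n<k. (y / g) ^ n / fact n)) ^ m))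
    \<sim>[at_top] (\<lambda>g. (b ^ (m * k + 1) - a ^ (m * k + 1)) / (fact k ^ m * g ^ (m * k) * real (m * k + 1)))"
proof -
  define N where "N = m * k"
  define Q where "Q x = (exp (- x) * exp_tail k x) ^ m" for x
  define L where "L = (b ^ (N + 1) - a ^ (N + 1)) / real (N + 1) * Q 0"
  have "continuous_on UNIV Q"
    unfolding Q_def by (intro continuous_at_imp_continuous_on ballI continuous_intros isCont_exp_tail)
  then have "((\<lambda>g. integral {a..b} (\<lambda>y. y ^ N * Q (y / g))) \<longlongrightarrow> L) at_top"
    using tendsto_integral_rescaled[of a b "\<lambda>y. y ^ N" Q] integral_power_interval[OF assms(1)]
    by (simp add: L_def continuous_intros)
  moreover have "L \<noteq> 0"
    using assms(2) unfolding L_def Q_def N_def by (simp del: of_nat_add of_nat_mult)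
  ultimately have "(\<lambda>g. integral {a..b} (\<lambda>y. y ^ N * Q (y / g)) * inverse (g ^ N))
      \<sim>[at_top] (\<lambda>g. L * inverse (g ^ N))"
    by (intro asymp_equiv_mult tendsto_imp_asymp_equiv_const asymp_equiv_refl)
  moreover have "(1 - exp (- y / g) * (\<Sum>n<k. (y / g) ^ n / fact n)) ^ m
      = y ^ N * Q (y / g) * inverse (g ^ N)" for y g
  proof -
    have "(1 - exp (- y / g) * (\<Sum>n<k. (y / g) ^ n / fact n)) ^ m
        = ((y / g) ^ k * (exp (- (y / g)) * exp_tail k (y / g))) ^ m"
      using one_minus_exp_times_partial_sum[of "y / g" k] by (simp add: mult.assoc)
    also have "\<dots> = (y / g) ^ N * Q (y / g)"
      by (simp add: Q_def N_def power_mult_distrib power_mult mult.commute)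
    finally show ?thesis
      by (simp add: divide_inverse power_mult_distrib power_inverse)
  qed
  moreover have "L * inverse (g ^ N)
      = (b ^ (N + 1) - a ^ (N + 1)) / (fact k ^ m * g ^ N * real (N + 1))" for g
    by (simp add: L_def Q_def power_inverse divide_inverse mult_ac)
  ultimately show ?thesis
    by (simp add: N_def)
qed

lemma integral_one_minus_exp_power_asymp_equiv:
  fixes a b :: real and m :: nat
  assumes "a \<le> b" and "b ^ (m + 1) \<noteq> a ^ (m + 1)"
  shows "(\<lambda>g. integral {a..b} (\<lambda>y. (1 - exp (- y / g)) ^ m))
    \<sim>[at_top] (\<lambda>g. (b ^ (m + 1) - a ^ (m + 1)) / (g ^ m * real (m + 1)))"
  using integral_erlang_cdf_power_asymp_equiv[of a b m 1] assms by simp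

lemma xi_pos: "R > 0 \<Longrightarrow> xi R > 0"
  using powr_less_mono[of 0 "2 * R" 2] by (simp add: xi_def)

lemma abs_phiL_less_phiH:
  assumes "R > 0" and "\<beta> > 0"
  shows "\<bar>phiL R \<beta>\<bar> < phiH R \<beta>"
proof -
  have "tau R > 0"
    using powr_less_mono[of 0 R 2] assms(1) by (simp add: tau_def)
  moreover have "1 / (2 * xi R * sqrt \<beta>) > 0"
    using xi_pos[OF assms(1)] assms(2) by simp
  ultimately show ?thesis
    unfolding phiL_def phiH_def by linarith
qed

lemma power_less_power_of_abs_less:
  fixes a b :: real
  assumes "\<bar>a\<bar> < b" and "n > 0"
  shows "a ^ n < b ^ n"
  using power_strict_mono[OF assms(1) abs_ge_zero assms(2)]
  by (metis abs_ge_self power_abs le_less_trans)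

theorem mainTheorem3:
  fixes NT NR :: nat and R \<beta> :: real
  assumes "NT \<ge> 1" and "NR \<ge> 1" and "R > 0" and "\<beta> > 0"
  shows "(\<lambda>g. eps_MRC NT NR R \<beta> g) \<sim>[at_top] (\<lambda>g. eps_inf_MRC NT NR R \<beta> g)
       \<and> (\<lambda>g. eps_SC NT NR R \<beta> g) \<sim>[at_top] (\<lambda>g. eps_inf_SC NT NR R \<beta> g)"
proof -
  let ?a = "phiL R \<beta>" and ?b = "phiH R \<beta>" and ?c = "xi R * sqrt \<beta>" and ?N = "NT * NR"
  have "\<bar>?a\<bar> < ?b"
    using abs_phiL_less_phiH assms(3,4) .
  then have ab: "?a \<le> ?b"
    by simp
  have D: "?b ^ (?N + 1) \<noteq> ?a ^ (?N + 1)"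
    using power_less_power_of_abs_less[OF \<open>\<bar>?a\<bar> < ?b\<close>, of "?N + 1"] by simp
  have "(\<lambda>g. ?c * integral {?a..?b} (F_MRC NT NR g))
      \<sim>[at_top] (\<lambda>g. ?c * ((?b ^ (?N + 1) - ?a ^ (?N + 1)) / (fact NR ^ NT * g ^ ?N * real (?N + 1))))"
    unfolding F_MRC_def
    by (intro asymp_equiv_mult asymp_equiv_refl integral_erlang_cdf_power_asymp_equiv ab D)
  moreover have "(\<lambda>g. ?c * integral {?a..?b} (F_SC NT NR g))
      \<sim>[at_top] (\<lambda>g. ?c * ((?b ^ (?N + 1) - ?a ^ (?N + 1)) / (g ^ ?N * real (?N + 1))))"
    unfolding F_SC_def
    by (intro asymp_equiv_mult asymp_equiv_refl integral_one_minus_exp_power_asymp_equiv ab D)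
  ultimately show ?thesis
    by (simp add: eps_MRC_def eps_SC_def eps_inf_MRC_def eps_inf_SC_def)
qed

end
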